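(* Let $\{p_\sigma\}$ and $\{p'_\sigma\}$ be two systems of probability parameters indexed by the non-empty proper subsets $\sigma\subsetneq[n]$ with $p_\sigma\le p'_\sigma$ for every simplex $\sigma$, and let $\underline{\mathbb P}_n,\underline{\mathbb P}'_n$ (resp. $\overline{\mathbb P}_n,\overline{\mathbb P}'_n$) be the associated lower (resp. upper) measures. Then for any integer $d\ge0$, $$\underline{\mathbb P}_n(\dim Y\ge d)\le\underline{\mathbb P}'_n(\dim Y\ge d)\quad\text{and}\quad\overline{\mathbb P}_n(\dim Y\ge d)\le\overline{\mathbb P}'_n(\dim Y\ge d).$$
   Context: $[n]=\{0,\dots,n\}$. Given parameters $p_\sigma\in[0,1]$ for non-empty proper subsets $\sigma\subsetneq[n]$, let $X$ be the random hypergraph containing each such $\sigma$ independently with probability $p_\sigma$. The lower measure is the law of the largest simplicial complex contained in $X$; the upper measure is the law of the smallest simplicial complex containing $X$. *)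

theory Defs
  imports "HOL-Probability.Probability"
begin

definition simplices :: "nat \<Rightarrow> nat set set" where
  "simplices n = {\<sigma>. \<sigma> \<subseteq> {0..n} \<and> \<sigma> \<noteq> {} \<and> \<sigma> \<noteq> {0..n}}"

definition hypergraph_pmf :: "nat \<Rightarrow> (nat set \<Rightarrow> real) \<Rightarrow> nat set set pmf" where
  "hypergraph_pmf n p =
     map_pmf (\<lambda>f. {\<sigma> \<in> simplices n. f \<sigma>})
       (Pi_pmf (simplices n) False (\<lambda>\<sigma>. bernoulli_pmf (p \<sigma>)))"

text \<open>Largest simplicial complex contained in X.\<close>
definition lower_complex :: "nat set set \<Rightarrow> nat set set" where
  "lower_complex X = {\<sigma> \<in> X. \<forall>\<tau>. \<tau> \<subseteq> \<sigma> \<and> \<tau> \<noteq> {} \<longrightarrow> \<tau> \<in> X}"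

text \<open>Smallest simplicial complex containing X.\<close>
definition upper_complex :: "nat set set \<Rightarrow> nat set set" where
  "upper_complex X = {\<tau>. \<tau> \<noteq> {} \<and> (\<exists>\<sigma>\<in>X. \<tau> \<subseteq> \<sigma>)}"

definition lower_measure :: "nat \<Rightarrow> (nat set \<Rightarrow> real) \<Rightarrow> nat set set pmf" where
  "lower_measure n p = map_pmf lower_complex (hypergraph_pmf n p)"

definition upper_measure :: "nat \<Rightarrow> (nat set \<Rightarrow> real) \<Rightarrow> nat set set pmf" where
  "upper_measure n p = map_pmf upper_complex (hypergraph_pmf n p)"

definition complex_dim :: "nat set set \<Rightarrow> int" where
  "complex_dim K = (if K = {} then -1 else int (Max (card ` K)) - 1)"

end

theory Submission
  imports Defs
begin

text \<open>Couple the two random hypergraphs so that one contains the other: include a simplex in the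
  larger one whenever it is in the smaller one, and otherwise with probability
  (p' - p) / (1 - p). The events "dim Y \<ge> d" for the lower and for the upper complex are
  upward closed under inclusion of hypergraphs, so their probabilities can only grow.\<close>

lemma bernoulli_pmf_monotone_coupling:
  fixes p p' :: real
  assumes "0 \<le> p" "p \<le> p'" "p' \<le> 1"
  obtains c where "map_pmf fst c = bernoulli_pmf p" "map_pmf snd c = bernoulli_pmf p'"
    "\<And>a b. (a, b) \<in> set_pmf c \<Longrightarrow> a \<longrightarrow> b"
proof
  define q where "q = (p' - p) / (1 - p)"
  have q: "0 \<le> q" "q \<le> 1" using assms by (auto simp: q_def divide_simps)
  define c where "c = do {a \<leftarrow> bernoulli_pmf p; b \<leftarrow> bernoulli_pmf q; return_pmf (a, a \<or> b)}"
  show "map_pmf fst c = bernoulli_pmf p"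
    unfolding c_def by (simp add: map_bind_pmf bind_return_pmf' bind_pmf_const)
  have "map_pmf snd c = do {a \<leftarrow> bernoulli_pmf p; b \<leftarrow> bernoulli_pmf q; return_pmf (a \<or> b)}"
    unfolding c_def by (simp add: map_bind_pmf)
  then have "pmf (map_pmf snd c) True = p + (1 - p) * q"
    using assms q by (simp add: pmf_bind)
  also have "\<dots> = pmf (bernoulli_pmf p') True"
    using assms by (cases "p = 1") (auto simp: q_def)
  finally show "map_pmf snd c = bernoulli_pmf p'"
    by (metis (full_types) pmf_False_conv_True pmf_eqI)
  show "\<And>a b. (a, b) \<in> set_pmf c \<Longrightarrow> a \<longrightarrow> b" unfolding c_def by auto
qed

lemma measure_pmf_prob_mono_coupling:
  assumes "map_pmf fst C = M" "map_pmf snd C = M'"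
    and "\<And>x y. (x, y) \<in> set_pmf C \<Longrightarrow> x \<in> A \<Longrightarrow> y \<in> A"
  shows "measure_pmf.prob M A \<le> measure_pmf.prob M' A"
proof -
  have "measure_pmf.prob M A = measure_pmf.prob C (fst -` A)"
    using assms(1) by (simp add: measure_map_pmf[symmetric])
  also have "\<dots> \<le> measure_pmf.prob C (snd -` A)"
    using assms(3) by (intro measure_pmf.finite_measure_mono_AE) (auto simp: AE_measure_pmf_iff)
  also have "\<dots> = measure_pmf.prob M' A"
    using assms(2) by (simp add: measure_map_pmf[symmetric])
  finally show ?thesis .
qed

lemma finite_simplices: "finite (simplices n)"
  by (rule finite_subset[of _ "Pow {0..n}"]) (auto simp: simplices_def)

lemma hypergraph_pmf_monotone_coupling:
  assumes "\<And>\<sigma>. \<sigma> \<in> simplices n \<Longrightarrow> 0 \<le> p \<sigma>"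
      and "\<And>\<sigma>. \<sigma> \<in> simplices n \<Longrightarrow> p' \<sigma> \<le> 1"
      and "\<And>\<sigma>. \<sigma> \<in> simplices n \<Longrightarrow> p \<sigma> \<le> p' \<sigma>"
  obtains C where "map_pmf fst C = hypergraph_pmf n p" "map_pmf snd C = hypergraph_pmf n p'"
    "\<And>X X'. (X, X') \<in> set_pmf C \<Longrightarrow> X \<subseteq> X' \<and> X' \<subseteq> simplices n"
proof -
  define S where "S = simplices n"
  have fin: "finite S" unfolding S_def by (rule finite_simplices)
  have "\<forall>\<sigma>\<in>S. \<exists>c. map_pmf fst c = bernoulli_pmf (p \<sigma>) \<and> map_pmf snd c = bernoulli_pmf (p' \<sigma>)
      \<and> (\<forall>(a, b)\<in>set_pmf c. a \<longrightarrow> b)"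
  proof
    fix \<sigma> assume "\<sigma> \<in> S"
    with assms obtain c where "map_pmf fst c = bernoulli_pmf (p \<sigma>)" "map_pmf snd c = bernoulli_pmf (p' \<sigma>)"
      "\<And>a b. (a, b) \<in> set_pmf c \<Longrightarrow> a \<longrightarrow> b"
      unfolding S_def by (metis bernoulli_pmf_monotone_coupling)
    then show "\<exists>c. map_pmf fst c = bernoulli_pmf (p \<sigma>) \<and> map_pmf snd c = bernoulli_pmf (p' \<sigma>)
      \<and> (\<forall>(a, b)\<in>set_pmf c. a \<longrightarrow> b)" by blast
  qed
  then obtain c where c_fst: "\<And>\<sigma>. \<sigma> \<in> S \<Longrightarrow> map_pmf fst (c \<sigma>) = bernoulli_pmf (p \<sigma>)"
    and c_snd: "\<And>\<sigma>. \<sigma> \<in> S \<Longrightarrow> map_pmf snd (c \<sigma>) = bernoulli_pmf (p' \<sigma>)"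
    and c_mono: "\<And>\<sigma>. \<sigma> \<in> S \<Longrightarrow> \<forall>(a, b)\<in>set_pmf (c \<sigma>). a \<longrightarrow> b"
    by (metis (no_types, lifting) bchoice)
  define H where "H = Pi_pmf S (False, False) c"
  have marginal: "Pi_pmf S False (\<lambda>\<sigma>. map_pmf g (c \<sigma>)) = map_pmf (\<lambda>h. g \<circ> h) H"
    if "g (False, False) = False" for g :: "bool \<times> bool \<Rightarrow> bool"
    unfolding H_def using fin that by (rule Pi_pmf_map)
  define C where "C = map_pmf (\<lambda>h. ({\<sigma> \<in> S. fst (h \<sigma>)}, {\<sigma> \<in> S. snd (h \<sigma>)})) H"
  show thesis
  proof
    have "hypergraph_pmf n p = map_pmf (\<lambda>f. {\<sigma> \<in> S. f \<sigma>}) (Pi_pmf S False (\<lambda>\<sigma>. map_pmf fst (c \<sigma>)))"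
      unfolding hypergraph_pmf_def S_def[symmetric] by (simp add: c_fst cong: Pi_pmf_cong)
    then show "map_pmf fst C = hypergraph_pmf n p"
      by (simp add: C_def marginal pmf.map_comp o_def)
    have "hypergraph_pmf n p' = map_pmf (\<lambda>f. {\<sigma> \<in> S. f \<sigma>}) (Pi_pmf S False (\<lambda>\<sigma>. map_pmf snd (c \<sigma>)))"
      unfolding hypergraph_pmf_def S_def[symmetric] by (simp add: c_snd cong: Pi_pmf_cong)
    then show "map_pmf snd C = hypergraph_pmf n p'"
      by (simp add: C_def marginal pmf.map_comp o_def)
    fix X X' assume "(X, X') \<in> set_pmf C"
    then obtain h where "h \<in> set_pmf H" and X: "X = {\<sigma> \<in> S. fst (h \<sigma>)}" "X' = {\<sigma> \<in> S. snd (h \<sigma>)}"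
      unfolding C_def by auto
    then have "\<forall>\<sigma>\<in>S. h \<sigma> \<in> set_pmf (c \<sigma>)"
      unfolding H_def set_Pi_pmf[OF fin] PiE_dflt_def by auto
    then show "X \<subseteq> X' \<and> X' \<subseteq> simplices n"
      using c_mono unfolding X S_def by fastforce
  qed
qed

lemma complex_dim_mono:
  assumes "finite K'" "K \<subseteq> K'"
  shows "complex_dim K \<le> complex_dim K'"
proof (cases "K = {}")
  case False
  then have "Max (card ` K) \<le> Max (card ` K')"
    using assms by (intro Max_mono image_mono) auto
  with False assms(2) show ?thesis by (auto simp: complex_dim_def)
qed (simp add: complex_dim_def)

lemma lower_complex_mono: "X \<subseteq> X' \<Longrightarrow> lower_complex X \<subseteq> lower_complex X'"
  by (auto simp: lower_complex_def)

lemma upper_complex_mono: "X \<subseteq> X' \<Longrightarrow> upper_complex X \<subseteq> upper_complex X'"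
  by (auto simp: upper_complex_def)

lemma finite_lower_complex: "finite X \<Longrightarrow> finite (lower_complex X)"
  by (rule finite_subset[of _ X]) (auto simp: lower_complex_def)

lemma finite_upper_complex: "X \<subseteq> simplices n \<Longrightarrow> finite (upper_complex X)"
  by (rule finite_subset[of _ "Pow {0..n}"]) (auto simp: upper_complex_def simplices_def)

theorem corollary4p3:
  fixes n d :: nat and p p' :: "nat set \<Rightarrow> real"
  assumes "\<And>\<sigma>. \<sigma> \<in> simplices n \<Longrightarrow> 0 \<le> p \<sigma> \<and> p \<sigma> \<le> 1"
      and "\<And>\<sigma>. \<sigma> \<in> simplices n \<Longrightarrow> 0 \<le> p' \<sigma> \<and> p' \<sigma> \<le> 1"
      and "\<And>\<sigma>. \<sigma> \<in> simplices n \<Longrightarrow> p \<sigma> \<le> p' \<sigma>"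
  shows "measure_pmf.prob (lower_measure n p) {Y. int d \<le> complex_dim Y}
           \<le> measure_pmf.prob (lower_measure n p') {Y. int d \<le> complex_dim Y}
       \<and> measure_pmf.prob (upper_measure n p) {Y. int d \<le> complex_dim Y}
           \<le> measure_pmf.prob (upper_measure n p') {Y. int d \<le> complex_dim Y}"
proof -
  obtain C where C_fst: "map_pmf fst C = hypergraph_pmf n p"
    and C_snd: "map_pmf snd C = hypergraph_pmf n p'"
    and C_mono: "\<And>X X'. (X, X') \<in> set_pmf C \<Longrightarrow> X \<subseteq> X' \<and> X' \<subseteq> simplices n"
    using hypergraph_pmf_monotone_coupling assms by blast
  have fin: "finite X'" if "X' \<subseteq> simplices n" for X'
    using finite_simplices that by (rule finite_subset[rotated])
  have lower: "complex_dim (lower_complex X) \<le> complex_dim (lower_complex X')"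
    and upper: "complex_dim (upper_complex X) \<le> complex_dim (upper_complex X')"
    if "(X, X') \<in> set_pmf C" for X X'
    using C_mono[OF that] fin
    by (auto intro!: complex_dim_mono lower_complex_mono upper_complex_mono
        finite_lower_complex finite_upper_complex)
  show ?thesis
    unfolding lower_measure_def upper_measure_def measure_map_pmf
  proof (intro conjI measure_pmf_prob_mono_coupling[OF C_fst C_snd])
    show "X' \<in> lower_complex -` {Y. int d \<le> complex_dim Y}"
      if "(X, X') \<in> set_pmf C" "X \<in> lower_complex -` {Y. int d \<le> complex_dim Y}" for X X'
      using that lower[OF that(1)] by simp
    show "X' \<in> upper_complex -` {Y. int d \<le> complex_dim Y}"
      if "(X, X') \<in> set_pmf C" "X \<in> upper_complex -` {Y. int d \<le> complex_dim Y}" for X X'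
      using that upper[OF that(1)] by simp
  qed
qed

end
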